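(* Let $b$ be a Boolean expression, $C$ a HeyVL statement, $I$ an expectation, $\vec v$ a list of variables, and let $S=\mathrm{Park}(b,C,I)$ be the HeyVL program $\mathtt{assert}\ I$ [labelled (1)]; $\mathtt{havoc}\ \vec v$; $\mathtt{validate}$; $\mathtt{assume}\ I$ [labelled (I)]; $\mathtt{if}\ b\ \{\ C;\ \mathtt{assert}\ I$ [labelled (2)]$;\ \mathtt{assume}\ ?(\mathsf{false})$ [labelled (II)] $\}\ \mathtt{else}\ \{\}$. Let $X,Y$ be expectations, and let $S'$ be obtained from $S$ by removing some subset of the assertions (1) and (2), such that $\sigma\not\models\{X\}S'\{Y\}$ for some state $\sigma$, and such that $S'$ is minimal with this property (removing any further one of the assertions (1),(2) that $S'$ still contains yields a program $S''$ with $\models\{X\}S''\{Y\}$). Then: (1) If $S'$ includes assertion (1), then $X(\sigma')\not\le I(\sigma')$ for some state $\sigma'$. (2) If $S'$ includes assertion (2), then there is a state $\sigma'$ in which $b$ is true and $\sigma'\not\models\{I\}C\{I\}$. (3) If $S'$ includes neither (1) nor (2), and $C$ contains neither $\mathtt{assert}$ nor $\mathtt{coassume}$ statements, then there is a state $\sigma'$ in which $b$ is false and $I(\sigma')\not\le Y(\sigma')$.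
   Context: Expectations are functions from program states to $[0,\infty]$, ordered pointwise. $?(b)$ denotes the expectation equal to $\infty$ where $b$ holds and $0$ elsewhere. HeyVL statements and verification pre-expectation transformer $\mathrm{vp}$: $x :\approx \sum_i p_i\cdot t_i$: $\sum_i p_i X[x/t_i]$; $\mathtt{reward}\ a$: $X+a$; $S_1;S_2$: $\mathrm{vp}[S_1](\mathrm{vp}[S_2](X))$; $\mathtt{if}(\sqcap)/\mathtt{if}(\sqcup)\{S_1\}\mathtt{else}\{S_2\}$: pointwise min/max of the branch values; $\mathtt{assert}\ Y$: $\min(Y,X)$; $\mathtt{coassert}\ Y$: $\max(Y,X)$; $\mathtt{assume}\ Y$: $\infty$ where $Y\le X$, else $X$; $\mathtt{coassume}\ Y$: $0$ where $Y\ge X$, else $X$; $\mathtt{havoc}\ \vec v$/$\mathtt{cohavoc}\ \vec v$: pointwise inf/sup of $X$ over all values of $\vec v$; $\mathtt{validate}$: $\infty$ where $X=\infty$, else $0$; $\mathtt{covalidate}$: $0$ where $X=0$, else $\infty$. The conditional $\mathtt{if}\ b\{S_1\}\mathtt{else}\{S_2\}$ abbreviates $\mathtt{if}(\sqcap)\{\mathtt{assume}\ ?(b);S_1\}\mathtt{else}\{\mathtt{assume}\ ?(\neg b);S_2\}$. Removing a statement means replacing it by $\mathtt{skip}$ with $\mathrm{vp}[\mathtt{skip}](X)=X$. Write $\sigma\models\{A\}S\{B\}$ iff $A(\sigma)\le\mathrm{vp}[S](B)(\sigma)$, and $\models\{A\}S\{B\}$ iff this holds for all states. *)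

theory Defs
  imports "HOL-Probability.Probability_Mass_Function"
begin

type_synonym ('v, 'a) state = "'v \<Rightarrow> 'a"
type_synonym ('v, 'a) expect = "('v, 'a) state \<Rightarrow> ennreal"

text \<open>HeyVL statements. The probabilistic assignment x :~ sum_i p_i * t_i is
  represented by a probability distribution over terms (state functions).\<close>

datatype ('v, 'a) heyvl =
    Skip
  | Assign 'v "(('v, 'a) state \<Rightarrow> 'a) pmf"
  | Reward "('v, 'a) expect"
  | Seq "('v, 'a) heyvl" "('v, 'a) heyvl"
  | IfDemonic "('v, 'a) heyvl" "('v, 'a) heyvl"
  | IfAngelic "('v, 'a) heyvl" "('v, 'a) heyvl"
  | Assert "('v, 'a) expect"
  | Coassert "('v, 'a) expect"
  | Assume "('v, 'a) expect"
  | Coassume "('v, 'a) expect"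
  | Havoc "'v list"
  | Cohavoc "'v list"
  | Validate
  | Covalidate

definition iverson_inf :: "(('v, 'a) state \<Rightarrow> bool) \<Rightarrow> ('v, 'a) expect" where
  "iverson_inf b = (\<lambda>\<sigma>. if b \<sigma> then \<infinity> else 0)"

definition variants :: "'v list \<Rightarrow> ('v, 'a) state \<Rightarrow> ('v, 'a) state set" where
  "variants vs \<sigma> = {\<tau>. \<forall>x. x \<notin> set vs \<longrightarrow> \<tau> x = \<sigma> x}"

fun vp :: "('v, 'a) heyvl \<Rightarrow> ('v, 'a) expect \<Rightarrow> ('v, 'a) expect" where
  "vp Skip X = X"
| "vp (Assign x D) X = (\<lambda>\<sigma>. \<integral>\<^sup>+ t. X (\<sigma>(x := t \<sigma>)) \<partial>measure_pmf D)"
| "vp (Reward a) X = (\<lambda>\<sigma>. X \<sigma> + a \<sigma>)"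
| "vp (Seq S1 S2) X = vp S1 (vp S2 X)"
| "vp (IfDemonic S1 S2) X = (\<lambda>\<sigma>. min (vp S1 X \<sigma>) (vp S2 X \<sigma>))"
| "vp (IfAngelic S1 S2) X = (\<lambda>\<sigma>. max (vp S1 X \<sigma>) (vp S2 X \<sigma>))"
| "vp (Assert Y) X = (\<lambda>\<sigma>. min (Y \<sigma>) (X \<sigma>))"
| "vp (Coassert Y) X = (\<lambda>\<sigma>. max (Y \<sigma>) (X \<sigma>))"
| "vp (Assume Y) X = (\<lambda>\<sigma>. if Y \<sigma> \<le> X \<sigma> then \<infinity> else X \<sigma>)"
| "vp (Coassume Y) X = (\<lambda>\<sigma>. if Y \<sigma> \<ge> X \<sigma> then 0 else X \<sigma>)"
| "vp (Havoc vs) X = (\<lambda>\<sigma>. INF \<tau>\<in>variants vs \<sigma>. X \<tau>)"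
| "vp (Cohavoc vs) X = (\<lambda>\<sigma>. SUP \<tau>\<in>variants vs \<sigma>. X \<tau>)"
| "vp Validate X = (\<lambda>\<sigma>. if X \<sigma> = \<infinity> then \<infinity> else 0)"
| "vp Covalidate X = (\<lambda>\<sigma>. if X \<sigma> = 0 then 0 else \<infinity>)"

definition IfB :: "(('v, 'a) state \<Rightarrow> bool) \<Rightarrow> ('v, 'a) heyvl \<Rightarrow> ('v, 'a) heyvl \<Rightarrow> ('v, 'a) heyvl" where
  "IfB b S1 S2 = IfDemonic (Seq (Assume (iverson_inf b)) S1)
                            (Seq (Assume (iverson_inf (\<lambda>\<sigma>. \<not> b \<sigma>))) S2)"

definition valid_at :: "('v, 'a) state \<Rightarrow> ('v, 'a) expect \<Rightarrow> ('v, 'a) heyvl \<Rightarrow> ('v, 'a) expect \<Rightarrow> bool" where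
  "valid_at \<sigma> A S B \<longleftrightarrow> A \<sigma> \<le> vp S B \<sigma>"

definition valid :: "('v, 'a) expect \<Rightarrow> ('v, 'a) heyvl \<Rightarrow> ('v, 'a) expect \<Rightarrow> bool" where
  "valid A S B \<longleftrightarrow> (\<forall>\<sigma>. valid_at \<sigma> A S B)"

text \<open>Park(b,C,I) with assertion (1) kept iff k1 and assertion (2) kept iff k2;
  a removed assertion is replaced by skip.\<close>
definition Park :: "bool \<Rightarrow> bool \<Rightarrow> (('v, 'a) state \<Rightarrow> bool) \<Rightarrow> ('v, 'a) heyvl \<Rightarrow>
    ('v, 'a) expect \<Rightarrow> 'v list \<Rightarrow> ('v, 'a) heyvl" where
  "Park k1 k2 b C I vs =
     Seq (if k1 then Assert I else Skip)
    (Seq (Havoc vs)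
    (Seq Validate
    (Seq (Assume I)
         (IfB b (Seq C (Seq (if k2 then Assert I else Skip)
                            (Assume (iverson_inf (\<lambda>_. False)))))
                Skip))))"

fun no_assert_coassume :: "('v, 'a) heyvl \<Rightarrow> bool" where
  "no_assert_coassume (Assert _) = False"
| "no_assert_coassume (Coassume _) = False"
| "no_assert_coassume (Seq S1 S2) = (no_assert_coassume S1 \<and> no_assert_coassume S2)"
| "no_assert_coassume (IfDemonic S1 S2) = (no_assert_coassume S1 \<and> no_assert_coassume S2)"
| "no_assert_coassume (IfAngelic S1 S2) = (no_assert_coassume S1 \<and> no_assert_coassume S2)"
| "no_assert_coassume _ = True"

end

theory Submission
  imports Defs
begin

text \<open>After \<open>validate\<close>, the verification pre-expectation of Park(b,C,I) without assertion (1)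
  is \<open>\<infinity>\<close> if \<open>I\<close> is below the post-expectation of the conditional on every variant of the
  initial state, and \<open>0\<close> otherwise; assertion (1) only takes the minimum with \<open>I\<close>.
  Hence if the program with (1) fails while the one without it is valid, \<open>X\<close> exceeds \<open>I\<close>.
  If \<open>I\<close> is inductive for \<open>C\<close> on \<open>b\<close>, then by monotonicity of \<open>vp\<close> assertion (2) changes
  nothing, so minimality forces a counterexample to inductivity. Without \<open>assert\<close> and
  \<open>coassume\<close>, \<open>C\<close> maps \<open>\<infinity>\<close> to \<open>\<infinity>\<close>, so when neither assertion is kept the only
  way to fail is on the exit branch \<open>\<not> b\<close>.\<close>

lemma vp_mono: "(\<And>\<sigma>. X \<sigma> \<le> X' \<sigma>) \<Longrightarrow> vp S X \<sigma> \<le> vp S X' \<sigma>"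
proof (induction S arbitrary: X X' \<sigma>)
  case (Assign x D)
  then show ?case by (simp add: nn_integral_mono)
next
  case (Seq S1 S2)
  then show ?case by simp
next
  case (IfDemonic S1 S2)
  show ?case unfolding vp.simps by (rule min.mono) (auto intro: IfDemonic.IH IfDemonic.prems)
next
  case (IfAngelic S1 S2)
  show ?case unfolding vp.simps by (rule max.mono) (auto intro: IfAngelic.IH IfAngelic.prems)
next
  case (Assert Y)
  then show ?case by (simp add: min.coboundedI2)
next
  case (Coassert Y)
  then show ?case by (simp add: max.coboundedI2)
next
  case (Assume Y)
  then show ?case using order_trans by simp blast
next
  case (Coassume Y)
  then show ?case using order_trans by simp blast
next
  case (Havoc vs)
  then show ?case by (simp add: INF_mono')
next
  case (Cohavoc vs)
  then show ?case by (simp add: SUP_mono')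
next
  case Validate
  show ?case using Validate.prems[of \<sigma>] by (auto simp: top_unique)
next
  case Covalidate
  show ?case using Covalidate.prems[of \<sigma>] by (auto simp: le_zero_eq)
qed (simp_all add: add_right_mono)

lemma vp_top_if_no_assert_coassume:
  "no_assert_coassume S \<Longrightarrow> vp S (\<lambda>_. \<infinity>) = (\<lambda>_. \<infinity>)"
proof (induction S)
  case (Assign x D)
  then show ?case by (simp add: measure_pmf.emeasure_space_1)
next
  case (Cohavoc vs)
  have "\<sigma> \<in> variants vs \<sigma>" for \<sigma> by (simp add: variants_def)
  then show ?case by (auto intro!: ext SUP_eq_const)
qed auto

lemma vp_IfB: "vp (IfB b S1 S2) X \<sigma> = (if b \<sigma> then vp S1 X \<sigma> else vp S2 X \<sigma>)"
  unfolding IfB_def by (simp add: iverson_inf_def top_unique)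

lemma INF_top_zero_indicator:
  "(INF x\<in>A. if P x then \<infinity> else (0::ennreal)) = (if \<forall>x\<in>A. P x then \<infinity> else 0)"
proof (cases "\<forall>x\<in>A. P x")
  case False
  then obtain x where "x \<in> A" "\<not> P x" by blast
  then have "(INF x\<in>A. if P x then \<infinity> else (0::ennreal)) \<le> 0"
    by (intro INF_lower2) auto
  with False show ?thesis by simp
qed simp

lemma vp_Validate_Assume:
  "vp Validate (vp (Assume I) X) = (\<lambda>\<sigma>. if I \<sigma> \<le> X \<sigma> then \<infinity> else 0)"
  by (auto simp: fun_eq_iff)

lemma vp_Park_without_first_assert:
  "vp (Park False k2 b C I vs) Y \<sigma> =
    (if \<forall>\<tau>\<in>variants vs \<sigma>. I \<tau> \<le> (if b \<tau> then vp C (if k2 then I else (\<lambda>_. \<infinity>)) \<tau> else Y \<tau>)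
     then \<infinity> else 0)"
proof -
  have "vp (if k2 then Assert I else Skip) (\<lambda>_. \<infinity>) = (if k2 then I else (\<lambda>_. \<infinity>))"
    by auto
  then have "vp (IfB b (Seq C (Seq (if k2 then Assert I else Skip)
                                   (Assume (iverson_inf (\<lambda>_. False))))) Skip) Y
           = (\<lambda>\<tau>. if b \<tau> then vp C (if k2 then I else (\<lambda>_. \<infinity>)) \<tau> else Y \<tau>)"
    by (simp add: fun_eq_iff vp_IfB iverson_inf_def)
  then show ?thesis
    unfolding Park_def
    by (simp only: vp.simps(1,4,11) if_False vp_Validate_Assume INF_top_zero_indicator)
qed

lemma vp_Park_with_first_assert:
  "vp (Park True k2 b C I vs) Y \<sigma> = min (I \<sigma>) (vp (Park False k2 b C I vs) Y \<sigma>)"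
  by (simp add: Park_def)

lemma vp_Park_second_assert_redundant:
  assumes I_inductive: "\<And>\<tau>. b \<tau> \<Longrightarrow> valid_at \<tau> I C I"
  shows "vp (Park k1 True b C I vs) Y = vp (Park k1 False b C I vs) Y"
proof -
  have "I \<tau> \<le> vp C (\<lambda>_. \<infinity>) \<tau>" if "b \<tau>" for \<tau>
    using I_inductive[OF that] vp_mono[of I "\<lambda>_. \<infinity>" C \<tau>] by (simp add: valid_at_def)
  then have "vp (Park False True b C I vs) Y = vp (Park False False b C I vs) Y"
    using I_inductive by (auto simp: vp_Park_without_first_assert valid_at_def)
  then show ?thesis
    by (cases k1) (simp_all add: fun_eq_iff vp_Park_with_first_assert)
qed

theorem theorem6:
  fixes b :: "('v, 'a) state \<Rightarrow> bool"
    and C :: "('v, 'a) heyvl"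
    and I X Y :: "('v, 'a) expect"
    and vs :: "'v list"
    and k1 k2 :: bool
    and \<sigma> :: "('v, 'a) state"
  assumes fails: "\<not> valid_at \<sigma> X (Park k1 k2 b C I vs) Y"
    and min1: "k1 \<Longrightarrow> valid X (Park False k2 b C I vs) Y"
    and min2: "k2 \<Longrightarrow> valid X (Park k1 False b C I vs) Y"
  shows "(k1 \<longrightarrow> (\<exists>\<sigma>'. \<not> X \<sigma>' \<le> I \<sigma>'))
       \<and> (k2 \<longrightarrow> (\<exists>\<sigma>'. b \<sigma>' \<and> \<not> valid_at \<sigma>' I C I))
       \<and> (\<not> k1 \<and> \<not> k2 \<and> no_assert_coassume C \<longrightarrow> (\<exists>\<sigma>'. \<not> b \<sigma>' \<and> \<not> I \<sigma>' \<le> Y \<sigma>'))"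
proof (intro conjI impI)
  assume k1
  then have "\<not> X \<sigma> \<le> I \<sigma>"
    using fails min1 by (auto simp: valid_def valid_at_def vp_Park_with_first_assert)
  then show "\<exists>\<sigma>'. \<not> X \<sigma>' \<le> I \<sigma>'" by blast
next
  assume k2
  show "\<exists>\<sigma>'. b \<sigma>' \<and> \<not> valid_at \<sigma>' I C I"
  proof (rule ccontr)
    assume "\<not> ?thesis"
    then have "vp (Park k1 True b C I vs) Y = vp (Park k1 False b C I vs) Y"
      by (intro vp_Park_second_assert_redundant) blast
    then show False
      using fails min2 \<open>k2\<close> by (auto simp: valid_def valid_at_def)
  qed
next
  assume "\<not> k1 \<and> \<not> k2 \<and> no_assert_coassume C"
  then have "\<not> k1" "\<not> k2" and C_top: "vp C (\<lambda>_. \<infinity>) = (\<lambda>_. \<infinity>)"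
    by (blast, blast, blast intro: vp_top_if_no_assert_coassume)
  then show "\<exists>\<sigma>'. \<not> b \<sigma>' \<and> \<not> I \<sigma>' \<le> Y \<sigma>'"
    using fails by (auto simp: valid_at_def vp_Park_without_first_assert split: if_splits)
qed

end
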